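(* Let $(X,\|\cdot\|_X)$ be a Banach space and $\mathcal{K}\subset X$ compact. (i) If for some constants $c_1>0$, $\alpha>0$, $\beta\in\mathbb{R}$ we have $\varepsilon_n(\mathcal{K})_X>c_1\frac{(\log_2n)^\beta}{n^\alpha}$ for all $n\ge2$, then for each $\gamma>0$ there exists $C>0$ such that $d_n^\gamma(\mathcal{K})_X\ge C\frac{(\log_2n)^{\beta-\alpha}}{n^\alpha}$ for all $n\ge2$. (ii) If for some constants $c_1>0$, $\alpha>0$ we have $\varepsilon_n(\mathcal{K})_X>c_1(\log_2n)^{-\alpha}$ for all $n\ge2$, then for each $\gamma>0$ there exists $C>0$ such that $d_n^\gamma(\mathcal{K})_X\ge C(\log_2n)^{-\alpha}$ for all $n\ge2$. (iii) If for some constants $c_1,c>0$ and $0<\alpha<1$ we have $\varepsilon_n(\mathcal{K})_X>c_12^{-cn^\alpha}$ for $n=1,2,\dots$, then for each $\gamma\ge2\,\mathrm{rad}(\mathcal{K})$ there exist constants $C,c_2>0$ such that $d_n^\gamma(\mathcal{K})_X\ge C2^{-c_2n^{\alpha/(1-\alpha)}}$ for $n=1,2,\dots$.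
   Context: $\mathrm{rad}(\mathcal{K})=\inf_{g\in X}\sup_{f\in\mathcal{K}}\|f-g\|_X$. For $m\ge0$, the entropy number $\varepsilon_m(\mathcal{K})_X$ is the infimum of all $\varepsilon>0$ such that $\mathcal{K}$ is covered by $2^m$ closed balls of radius $\varepsilon$ with centers in $X$. For $k\ge1$ and a norm $\|\cdot\|_{Y_k}$ on $\mathbb{R}^k$ let $B_{Y_k}=\{y\in\mathbb{R}^k:\|y\|_{Y_k}\le1\}$. For $\gamma\ge0$, the fixed Lipschitz width is $d^\gamma(\mathcal{K},Y_k)_X=\inf_{\Phi}\sup_{f\in\mathcal{K}}\inf_{y\in B_{Y_k}}\|f-\Phi(y)\|_X$, the infimum over all maps $\Phi:B_{Y_k}\to X$ with $\|\Phi(y)-\Phi(y')\|_X\le\gamma\|y-y'\|_{Y_k}$ for all $y,y'\in B_{Y_k}$. The Lipschitz width is $d_n^\gamma(\mathcal{K})_X=\inf_{1\le k\le n}\inf_{\|\cdot\|_{Y_k}}d^\gamma(\mathcal{K},Y_k)_X$, the inner infimum over all norms on $\mathbb{R}^k$. *)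

theory Defs
  imports "HOL-Analysis.Analysis"
begin

definition rad :: "'a::real_normed_vector set \<Rightarrow> real" where
  "rad K = Inf (range (\<lambda>g. SUP f\<in>K. norm (f - g)))"

definition entropy_number :: "nat \<Rightarrow> 'a::real_normed_vector set \<Rightarrow> real" where
  "entropy_number m K = Inf {eps. eps > 0 \<and>
     (\<exists>C. finite C \<and> card C \<le> 2 ^ m \<and> K \<subseteq> (\<Union>c\<in>C. cball c eps))}"

text \<open>R^k is represented as functions nat => real vanishing at indices i >= k.\<close>
definition Rk :: "nat \<Rightarrow> (nat \<Rightarrow> real) set" where
  "Rk k = {y. \<forall>i\<ge>k. y i = 0}"

definition is_norm_on :: "nat \<Rightarrow> ((nat \<Rightarrow> real) \<Rightarrow> real) \<Rightarrow> bool" where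
  "is_norm_on k N \<longleftrightarrow>
     (\<forall>x\<in>Rk k. N x \<ge> 0 \<and> (N x = 0 \<longleftrightarrow> x = (\<lambda>i. 0))) \<and>
     (\<forall>x\<in>Rk k. \<forall>a. N (\<lambda>i. a * x i) = \<bar>a\<bar> * N x) \<and>
     (\<forall>x\<in>Rk k. \<forall>y\<in>Rk k. N (\<lambda>i. x i + y i) \<le> N x + N y)"

definition unit_ball :: "nat \<Rightarrow> ((nat \<Rightarrow> real) \<Rightarrow> real) \<Rightarrow> (nat \<Rightarrow> real) set" where
  "unit_ball k N = {y \<in> Rk k. N y \<le> 1}"

definition lipschitz_on_ball ::
  "real \<Rightarrow> nat \<Rightarrow> ((nat \<Rightarrow> real) \<Rightarrow> real) \<Rightarrow> ((nat \<Rightarrow> real) \<Rightarrow> 'a::real_normed_vector) \<Rightarrow> bool" where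
  "lipschitz_on_ball \<gamma> k N \<Phi> \<longleftrightarrow>
     (\<forall>y\<in>unit_ball k N. \<forall>y'\<in>unit_ball k N. norm (\<Phi> y - \<Phi> y') \<le> \<gamma> * N (\<lambda>i. y i - y' i))"

definition fixed_lip_width ::
  "real \<Rightarrow> 'a::real_normed_vector set \<Rightarrow> nat \<Rightarrow> ((nat \<Rightarrow> real) \<Rightarrow> real) \<Rightarrow> real" where
  "fixed_lip_width \<gamma> K k N = Inf ((\<lambda>\<Phi>. SUP f\<in>K. INF y\<in>unit_ball k N. norm (f - \<Phi> y))
       ` {\<Phi>. lipschitz_on_ball \<gamma> k N \<Phi>})"

definition lip_width :: "nat \<Rightarrow> real \<Rightarrow> 'a::real_normed_vector set \<Rightarrow> real" where
  "lip_width n \<gamma> K = Inf {fixed_lip_width \<gamma> K k N | k N. 1 \<le> k \<and> k \<le> n \<and> is_norm_on k N}"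

end

(*
  If \<Phi> is \<gamma>-Lipschitz on the unit ball of some norm on R^k, k \<le> n, then a covering of
  that ball by (7n/r)^n balls of radius r is mapped by \<Phi> to a covering of K by balls of
  radius d + \<gamma> r, where d is the approximation error of \<Phi>.  Hence
  \<epsilon>_m(K) - \<gamma> r \<le> d_n^\<gamma>(K) whenever (7n/r)^n \<le> 2^m.  The covering exists uniformly in
  the norm because the unit ball has a basis whose coefficient functionals are bounded by 2
  (a near-maximal determinant and Cramer's rule).  Taking r proportional to the assumed lower
  bound on \<epsilon>_m and m of order n log n (polynomial rates) or n^(1/(1-\<alpha>)) (sub-exponential
  rates) gives the lower bounds for large n, and monotonicity of d_n^\<gamma> in n extends them to
  all n.
*)
theory Submission
  imports Defs "Jordan_Normal_Form.Determinant" "HOL-Real_Asymp.Real_Asymp"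
begin

lemma Rk_zero [simp]: "(\<lambda>i. 0) \<in> Rk k"
  and Rk_add [intro]: "x \<in> Rk k \<Longrightarrow> y \<in> Rk k \<Longrightarrow> (\<lambda>i. x i + y i) \<in> Rk k"
  and Rk_diff [intro]: "x \<in> Rk k \<Longrightarrow> y \<in> Rk k \<Longrightarrow> (\<lambda>i. x i - y i) \<in> Rk k"
  and Rk_scale [intro]: "x \<in> Rk k \<Longrightarrow> (\<lambda>i. a * x i) \<in> Rk k"
  and Rk_sum [intro]: "(\<And>j. j \<in> J \<Longrightarrow> v j \<in> Rk k) \<Longrightarrow> (\<lambda>i. \<Sum>j\<in>J. c j * v j i) \<in> Rk k"
  by (simp_all add: Rk_def)

lemma Rk_mono: "k \<le> k' \<Longrightarrow> x \<in> Rk k \<Longrightarrow> x \<in> Rk k'"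
  by (simp add: Rk_def)

locale norm_on_Rk =
  fixes k :: nat and N :: "(nat \<Rightarrow> real) \<Rightarrow> real"
  assumes is_norm: "is_norm_on k N"
begin

lemma nonneg: "x \<in> Rk k \<Longrightarrow> 0 \<le> N x"
  and eq_0_iff: "x \<in> Rk k \<Longrightarrow> N x = 0 \<longleftrightarrow> x = (\<lambda>i. 0)"
  and scale: "x \<in> Rk k \<Longrightarrow> N (\<lambda>i. a * x i) = \<bar>a\<bar> * N x"
  and triangle: "x \<in> Rk k \<Longrightarrow> y \<in> Rk k \<Longrightarrow> N (\<lambda>i. x i + y i) \<le> N x + N y"
  using is_norm by (simp_all add: is_norm_on_def)

lemma zero [simp]: "N (\<lambda>i. 0) = 0"
  using eq_0_iff[of "\<lambda>i. 0"] by simp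

lemma minus: "x \<in> Rk k \<Longrightarrow> N (\<lambda>i. - x i) = N x"
  using scale[of x "-1"] by simp

lemma triangle_diff: "x \<in> Rk k \<Longrightarrow> y \<in> Rk k \<Longrightarrow> N (\<lambda>i. x i - y i) \<le> N x + N y"
  using triangle[of x "\<lambda>i. - y i"] minus[of y] by (auto simp: Rk_def)

lemma sum_le:
  assumes "finite J" "\<And>j. j \<in> J \<Longrightarrow> v j \<in> Rk k"
  shows "N (\<lambda>i. \<Sum>j\<in>J. c j * v j i) \<le> (\<Sum>j\<in>J. \<bar>c j\<bar> * N (v j))"
  using assms
proof (induction J rule: finite_induct)
  case (insert a J)
  have "N (\<lambda>i. \<Sum>j\<in>insert a J. c j * v j i) = N (\<lambda>i. c a * v a i + (\<Sum>j\<in>J. c j * v j i))"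
    using insert by simp
  also have "\<dots> \<le> \<bar>c a\<bar> * N (v a) + N (\<lambda>i. \<Sum>j\<in>J. c j * v j i)"
    using insert triangle[of "\<lambda>i. c a * v a i" "\<lambda>i. \<Sum>j\<in>J. c j * v j i"] scale[of "v a" "c a"]
    by auto
  finally show ?case
    using insert by simp
qed simp

lemma restrict: "k' \<le> k \<Longrightarrow> norm_on_Rk k' N"
  using is_norm Rk_mono[of k' k] unfolding norm_on_Rk_def is_norm_on_def by blast

end

lemma norm_on_Rk_l1: "norm_on_Rk k (\<lambda>x. \<Sum>i<k. \<bar>x i\<bar>)"
proof -
  have "x = (\<lambda>i. 0)" if "x \<in> Rk k" "(\<Sum>i<k. \<bar>x i\<bar>) = 0" for x
  proof
    fix i
    show "x i = 0"
      using that sum_nonneg_eq_0_iff[of "{..<k}" "\<lambda>i. \<bar>x i\<bar>"] by (cases "i < k") (auto simp: Rk_def)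
  qed
  moreover have "(\<Sum>i<k. \<bar>x i + y i\<bar>) \<le> (\<Sum>i<k. \<bar>x i\<bar>) + (\<Sum>i<k. \<bar>y i\<bar>)" for x y :: "nat \<Rightarrow> real"
    by (simp add: sum.distrib[symmetric] sum_mono abs_triangle_ineq)
  ultimately show ?thesis
    unfolding norm_on_Rk_def is_norm_on_def by (auto simp: abs_mult sum_distrib_left intro!: sum_nonneg)
qed

section \<open>Norms dominate the coordinates\<close>

lemma convergent_of_pairwise_bound:
  fixes X b :: "nat \<Rightarrow> real"
  assumes b: "b \<longlonglongrightarrow> 0" and X: "\<And>m l. \<bar>X m - X l\<bar> \<le> b m + b l"
  shows "convergent X"
proof -
  have "Cauchy X"
  proof (rule CauchyI)
    fix e :: real assume "0 < e"
    then obtain M where M: "\<And>n. n \<ge> M \<Longrightarrow> \<bar>b n\<bar> < e/2"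
      using LIMSEQ_D[OF b, of "e/2"] by auto
    have "b m + b n < e" if "m \<ge> M" "n \<ge> M" for m n
      using M[OF that(1)] M[OF that(2)] abs_ge_self[of "b m"] abs_ge_self[of "b n"] by linarith
    then show "\<exists>M. \<forall>m\<ge>M. \<forall>n\<ge>M. norm (X m - X n) < e"
      using X by (metis order.strict_trans1 real_norm_def)
  qed
  then show ?thesis
    by (simp add: Cauchy_convergent_iff)
qed

context norm_on_Rk
begin

lemma coordinatewise_limit:
  assumes j: "j \<le> k" and a: "a > 0" "\<And>x i. x \<in> Rk j \<Longrightarrow> a * \<bar>x i\<bar> \<le> N x"
    and w: "w \<in> Rk k" and ys: "\<And>m. ys m \<in> Rk j"
    and lim: "(\<lambda>m. N (\<lambda>i. w i + ys m i)) \<longlonglongrightarrow> 0"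
  shows "\<exists>z\<in>Rk j. \<forall>i. (\<lambda>m. ys m i) \<longlonglongrightarrow> z i"
proof -
  have "convergent (\<lambda>m. ys m i)" for i
  proof (rule convergent_of_pairwise_bound)
    show "(\<lambda>m. N (\<lambda>i. w i + ys m i) / a) \<longlonglongrightarrow> 0"
      using tendsto_divide_zero[OF lim] .
    fix m l
    have "a * \<bar>ys m i - ys l i\<bar> \<le> N (\<lambda>i. (w i + ys m i) - (w i + ys l i))"
      using a(2)[of "\<lambda>i. ys m i - ys l i" i] ys by auto
    also have "\<dots> \<le> N (\<lambda>i. w i + ys m i) + N (\<lambda>i. w i + ys l i)"
      using w ys Rk_mono[OF j] by (intro triangle_diff) auto
    finally show "\<bar>ys m i - ys l i\<bar> \<le> N (\<lambda>i. w i + ys m i) / a + N (\<lambda>i. w i + ys l i) / a"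
      using a(1) by (simp add: field_simps)
  qed
  then obtain z where z: "\<And>i. (\<lambda>m. ys m i) \<longlonglongrightarrow> z i"
    unfolding convergent_def by metis
  have "z i = 0" if "i \<ge> j" for i
  proof -
    have "(\<lambda>m. ys m i) = (\<lambda>m. 0)"
      using ys that by (auto simp: Rk_def)
    then show ?thesis
      using z[of i] LIMSEQ_unique[OF _ tendsto_const] by metis
  qed
  then show ?thesis
    using z by (auto simp: Rk_def)
qed

lemma null_limit_in_subspace:
  assumes j: "j \<le> k" and a: "a > 0" "\<And>x i. x \<in> Rk j \<Longrightarrow> a * \<bar>x i\<bar> \<le> N x"
    and w: "w \<in> Rk k" and ys: "\<And>m. ys m \<in> Rk j"
    and lim: "(\<lambda>m. N (\<lambda>i. w i + ys m i)) \<longlonglongrightarrow> 0"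
  shows "\<exists>z\<in>Rk j. N (\<lambda>i. w i + z i) = 0"
proof -
  obtain z where zR: "z \<in> Rk j" and z: "\<And>i. (\<lambda>m. ys m i) \<longlonglongrightarrow> z i"
    using coordinatewise_limit[OF assms] by blast
  define u where "u l = (\<lambda>i::nat. if i = l then 1 else 0 :: real)" for l
  have bound: "N (\<lambda>i. w i + z i) \<le> N (\<lambda>i. w i + ys m i) + (\<Sum>l<j. \<bar>z l - ys m l\<bar> * N (u l))" for m
  proof -
    have "(\<lambda>i. z i - ys m i) = (\<lambda>i. \<Sum>l<j. (z l - ys m l) * u l i)"
      using zR ys[of m] by (auto simp: u_def Rk_def if_distrib cong: if_cong)
    moreover have "N (\<lambda>i. w i + z i) \<le> N (\<lambda>i. w i + ys m i) + N (\<lambda>i. z i - ys m i)"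
      using triangle[of "\<lambda>i. w i + ys m i" "\<lambda>i. z i - ys m i"] w ys zR Rk_mono[OF j] by auto
    moreover have "N (\<lambda>i. \<Sum>l<j. (z l - ys m l) * u l i) \<le> (\<Sum>l<j. \<bar>z l - ys m l\<bar> * N (u l))"
      using j by (intro sum_le) (auto simp: u_def Rk_def)
    ultimately show ?thesis
      by simp
  qed
  have "(\<lambda>m. N (\<lambda>i. w i + ys m i) + (\<Sum>l<j. \<bar>z l - ys m l\<bar> * N (u l)))
      \<longlonglongrightarrow> 0 + (\<Sum>l<j. \<bar>z l - z l\<bar> * N (u l))"
    by (intro tendsto_intros lim z)
  then have "N (\<lambda>i. w i + z i) \<le> 0 + (\<Sum>l<j. \<bar>z l - z l\<bar> * N (u l))"
    by (rule tendsto_le[OF trivial_limit_sequentially _ tendsto_const]) (simp_all add: bound always_eventually)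
  then show ?thesis
    using zR w nonneg[of "\<lambda>i. w i + z i"] Rk_mono[OF j] by (intro bexI[of _ z]) auto
qed

lemma dist_to_subspace_pos:
  assumes j: "j \<le> k" and a: "a > 0" "\<And>x i. x \<in> Rk j \<Longrightarrow> a * \<bar>x i\<bar> \<le> N x"
    and w: "w \<in> Rk k" "w j \<noteq> 0"
  shows "\<exists>d>0. \<forall>y\<in>Rk j. d \<le> N (\<lambda>i. w i + y i)"
proof (rule ccontr)
  assume "\<not> ?thesis"
  then have "\<exists>y\<in>Rk j. N (\<lambda>i. w i + y i) < inverse (real (Suc m))" for m
    by (metis inverse_positive_iff_positive not_le of_nat_0_less_iff zero_less_Suc)
  then obtain ys where ys: "\<And>m. ys m \<in> Rk j" "\<And>m. N (\<lambda>i. w i + ys m i) < inverse (real (Suc m))"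
    by metis
  have "(\<lambda>m. N (\<lambda>i. w i + ys m i)) \<longlonglongrightarrow> 0"
  proof (rule real_tendsto_sandwich[OF _ _ tendsto_const LIMSEQ_inverse_real_of_nat])
    show "\<forall>\<^sub>F m in sequentially. 0 \<le> N (\<lambda>i. w i + ys m i)"
      using ys(1) w Rk_mono[OF j] by (intro always_eventually allI nonneg) auto
    show "\<forall>\<^sub>F m in sequentially. N (\<lambda>i. w i + ys m i) \<le> inverse (real (Suc m))"
      using ys(2) by (intro always_eventually allI less_imp_le)
  qed
  from null_limit_in_subspace[OF j a w(1) ys(1) this]
  obtain z where z: "z \<in> Rk j" "N (\<lambda>i. w i + z i) = 0" ..
  then have "(\<lambda>i. w i + z i) = (\<lambda>i. 0)"
    using eq_0_iff[OF Rk_add[OF w(1) Rk_mono[OF j z(1)]]] by simp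
  then have "w j + z j = 0"
    by meson
  then show False
    using z(1) w(2) by (simp add: Rk_def)
qed

lemma last_coordinate_bound:
  assumes k: "k = Suc j" and d: "\<And>y. y \<in> Rk j \<Longrightarrow> d \<le> N (\<lambda>i. e i + y i)"
    and e: "e = (\<lambda>i. if i = j then 1 else 0)" and x: "x \<in> Rk k"
  shows "\<bar>x j\<bar> * d \<le> N x"
proof (cases "x j = 0")
  case False
  define y where "y i = inverse (x j) * (x i - x j * e i)" for i
  have y: "y \<in> Rk j"
    using x k by (auto simp: y_def e Rk_def)
  have "x = (\<lambda>i. x j * (e i + y i))"
    using False by (auto simp: y_def field_simps)
  moreover have "(\<lambda>i. e i + y i) \<in> Rk k"
    using y k by (auto simp: e Rk_def)
  ultimately have "N x = \<bar>x j\<bar> * N (\<lambda>i. e i + y i)"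
    using scale by metis
  then show ?thesis
    using d[OF y] by (simp add: mult_left_mono)
qed (use nonneg x in auto)

lemma projection_bound:
  assumes k: "k = Suc j" and d: "0 < d" "\<And>y. y \<in> Rk j \<Longrightarrow> d \<le> N (\<lambda>i. e i + y i)"
    and e: "e = (\<lambda>i. if i = j then 1 else 0)" and x: "x \<in> Rk k"
  shows "N (\<lambda>i. x i - x j * e i) * d \<le> N x * (d + N e)"
proof -
  have eR: "e \<in> Rk k"
    using k by (auto simp: e Rk_def)
  have "N (\<lambda>i. x i - x j * e i) * d \<le> (N x + \<bar>x j\<bar> * N e) * d"
    using triangle_diff[OF x Rk_scale[OF eR], of "x j"] scale[OF eR, of "x j"] d(1) by simp
  also have "\<dots> \<le> N x * (d + N e)"
    using mult_right_mono[OF last_coordinate_bound[OF k d(2) e x] nonneg[OF eR]]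
    by (simp add: algebra_simps)
  finally show ?thesis .
qed

lemma coordinate_bound_Suc:
  assumes k: "k = Suc j" and a': "a' > 0" "\<And>x i. x \<in> Rk j \<Longrightarrow> a' * \<bar>x i\<bar> \<le> N x"
  shows "\<exists>a>0. \<forall>x\<in>Rk k. \<forall>i. a * \<bar>x i\<bar> \<le> N x"
proof -
  define e where "e = (\<lambda>i. if i = j then 1 else 0 :: real)"
  have e: "e \<in> Rk k" "e j \<noteq> 0"
    using k by (auto simp: e_def Rk_def)
  obtain d where d: "d > 0" "\<And>y. y \<in> Rk j \<Longrightarrow> d \<le> N (\<lambda>i. e i + y i)"
    using dist_to_subspace_pos[OF _ a' e] k by auto
  have Ne: "0 \<le> N e"
    using nonneg e by auto
  define a where "a = min d (a' * d / (d + N e))"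
  have "a * \<bar>x i\<bar> \<le> N x" if x: "x \<in> Rk k" for x i
  proof (cases "i = j")
    case True
    then show ?thesis
      using last_coordinate_bound[OF k d(2) e_def x] mult_right_mono[of a d "\<bar>x j\<bar>"]
      by (simp add: a_def mult.commute)
  next
    case False
    have "(\<lambda>i. x i - x j * e i) \<in> Rk j"
      using x k by (auto simp: e_def Rk_def)
    from a'(2)[OF this, of i] have "a' * \<bar>x i\<bar> * d \<le> N (\<lambda>i. x i - x j * e i) * d"
      using False d(1) by (simp add: e_def mult_right_mono)
    also have "\<dots> \<le> N x * (d + N e)"
      using projection_bound[OF k d e_def x] .
    finally have "a' * d / (d + N e) * \<bar>x i\<bar> \<le> N x"
      using d(1) Ne by (simp add: field_simps)
    moreover have "a * \<bar>x i\<bar> \<le> a' * d / (d + N e) * \<bar>x i\<bar>"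
      unfolding a_def by (intro mult_right_mono) auto
    ultimately show ?thesis
      by linarith
  qed
  moreover have "a > 0"
    using d(1) a'(1) Ne by (simp add: a_def)
  ultimately show ?thesis
    by blast
qed

end

lemma coordinate_bound: "is_norm_on k N \<Longrightarrow> \<exists>a>0. \<forall>x\<in>Rk k. \<forall>i. a * \<bar>x i\<bar> \<le> N x"
proof (induction k arbitrary: N)
  case 0
  then show ?case
    by (intro exI[of _ 1]) (auto simp: Rk_def norm_on_Rk.zero norm_on_Rk_def)
next
  case (Suc j)
  interpret norm_on_Rk "Suc j" N
    using Suc.prems by (simp add: norm_on_Rk_def)
  obtain a' where "a' > 0" "\<And>x i. x \<in> Rk j \<Longrightarrow> a' * \<bar>x i\<bar> \<le> N x"
    using Suc.IH[of N] restrict[of j] by (auto simp: norm_on_Rk_def)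
  then show ?case
    using coordinate_bound_Suc by blast
qed

section \<open>A near-Auerbach basis of the unit ball\<close>

definition col_mat :: "nat \<Rightarrow> (nat \<Rightarrow> nat \<Rightarrow> real) \<Rightarrow> real Matrix.mat" where
  "col_mat k v = Matrix.mat k k (\<lambda>(i, j). v j i)"

lemma col_mat_carrier [simp]: "col_mat k v \<in> carrier_mat k k"
  by (simp add: col_mat_def)

lemma abs_det_col_mat_le:
  assumes "\<And>j i. j < k \<Longrightarrow> \<bar>v j i\<bar> \<le> R"
  shows "\<bar>det (col_mat k v)\<bar> \<le> fact k * R ^ k"
proof -
  have "\<bar>det (col_mat k v)\<bar> \<le> (\<Sum>p\<in>{p. p permutes {0..<k}}. \<bar>signof p * (\<Prod>i = 0..<k. v (p i) i)\<bar>)"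
    unfolding det_def'[OF col_mat_carrier]
    by (rule order_trans[OF sum_abs eq_refl],
        intro sum.cong refl arg_cong[where f = abs] arg_cong2[where f = "(*)"] prod.cong)
      (auto simp: col_mat_def permutes_in_image)
  also have "\<dots> \<le> (\<Sum>p\<in>{p. p permutes {0..<k}}. R ^ k)"
  proof (rule sum_mono)
    fix p assume p: "p \<in> {p. p permutes {0..<k}}"
    have "\<bar>signof p * (\<Prod>i = 0..<k. v (p i) i)\<bar> = (\<Prod>i = 0..<k. \<bar>v (p i) i\<bar>)"
      by (simp add: abs_mult sign_def abs_prod)
    also have "\<dots> \<le> (\<Prod>i = 0..<k. R)"
      using assms p by (intro prod_mono) (auto simp: permutes_in_image)
    finally show "\<bar>signof p * (\<Prod>i = 0..<k. v (p i) i)\<bar> \<le> R ^ k"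
      by simp
  qed
  also have "\<dots> = fact k * R ^ k"
    by (simp add: card_permutations)
  finally show ?thesis .
qed

text \<open>Taking a family with at least half the largest volume \<open>|det|\<close> avoids any compactness argument.\<close>
lemma exists_near_maximal_det:
  assumes B: "\<forall>y\<in>B. \<forall>i. \<bar>y i\<bar> \<le> R"
    and v0: "\<forall>j<k. v0 j \<in> B" "det (col_mat k v0) \<noteq> 0"
  shows "\<exists>v. (\<forall>j<k. v j \<in> B) \<and> det (col_mat k v) \<noteq> 0 \<and>
    (\<forall>w. (\<forall>j<k. w j \<in> B) \<longrightarrow> \<bar>det (col_mat k w)\<bar> \<le> 2 * \<bar>det (col_mat k v)\<bar>)"
proof -
  define D where "D = {\<bar>det (col_mat k v)\<bar> | v. \<forall>j<k. v j \<in> B}"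
  have bdd: "bdd_above D"
    unfolding D_def using B by (intro bdd_aboveI[of _ "fact k * R ^ k"]) (auto intro!: abs_det_col_mat_le)
  have D0: "\<bar>det (col_mat k v0)\<bar> \<in> D"
    using v0 by (auto simp: D_def)
  then have pos: "Sup D > 0"
    using v0(2) cSup_upper[OF D0 bdd] by linarith
  then obtain d where "d \<in> D" "Sup D / 2 < d"
    using less_cSup_iff[OF _ bdd, of "Sup D / 2"] D0 by auto
  then obtain v where v: "\<forall>j<k. v j \<in> B" "Sup D < 2 * \<bar>det (col_mat k v)\<bar>"
    by (auto simp: D_def)
  have "\<bar>det (col_mat k w)\<bar> \<le> 2 * \<bar>det (col_mat k v)\<bar>" if "\<forall>j<k. w j \<in> B" for w
  proof -
    have "\<bar>det (col_mat k w)\<bar> \<in> D"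
      using that by (auto simp: D_def)
    then show ?thesis
      using cSup_upper[OF _ bdd] v(2) by fastforce
  qed
  then show ?thesis
    using v pos by (intro exI[of _ v]) auto
qed

lemma cramer_coefficients:
  assumes det: "det (col_mat k v) \<noteq> 0" and v: "\<forall>j<k. v j \<in> Rk k"
  shows "\<exists>coef. \<forall>x\<in>Rk k. (\<forall>i. x i = (\<Sum>j<k. coef x j * v j i)) \<and>
    (\<forall>j<k. coef x j * det (col_mat k v) = det (col_mat k (v(j := x))))"
proof -
  define M where "M = col_mat k v"
  define Mi where "Mi = (1 / det M) \<cdot>\<^sub>m adj_mat M"
  have M: "M \<in> carrier_mat k k" and Mi: "Mi \<in> carrier_mat k k"
    using adj_mat(1)[of M k] by (auto simp: M_def Mi_def)
  have "M * Mi = (1 / det M) \<cdot>\<^sub>m (M * adj_mat M)"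
    unfolding Mi_def by (rule mult_smult_distrib[OF M adj_mat(1)[OF M]])
  also have "\<dots> = (1 / det M) \<cdot>\<^sub>m (det M \<cdot>\<^sub>m 1\<^sub>m k)"
    using adj_mat(2)[OF M] by simp
  also have "\<dots> = 1\<^sub>m k"
    using det by (intro eq_matI) (auto simp: M_def)
  finally have M_Mi: "M *\<^sub>v (Mi *\<^sub>v Matrix.vec k x) = Matrix.vec k x" for x
    using assoc_mult_mat_vec[OF M Mi, of "Matrix.vec k x"] by simp
  define coef where "coef x j = (Mi *\<^sub>v Matrix.vec k x) $ j" for x j
  have repr: "x i = (\<Sum>j<k. coef x j * v j i)" if x: "x \<in> Rk k" for x i
  proof (cases "i < k")
    case True
    have "x i = (M *\<^sub>v (Mi *\<^sub>v Matrix.vec k x)) $ i"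
      using True by (simp add: M_Mi)
    also have "\<dots> = (\<Sum>j<k. coef x j * v j i)"
      using True M Mi by (auto simp: scalar_prod_def coef_def M_def col_mat_def atLeast0LessThan
        intro!: sum.cong)
    finally show ?thesis .
  qed (use x v in \<open>auto simp: Rk_def\<close>)
  have "coef x j * det M = det (col_mat k (v(j := x)))" if "j < k" for x j
  proof -
    have "replace_col M (M *\<^sub>v (Mi *\<^sub>v Matrix.vec k x)) j = col_mat k (v(j := x))"
      unfolding M_Mi by (rule eq_matI) (auto simp: replace_col_def M_def col_mat_def)
    then show ?thesis
      using cramer_lemma_mat[OF M _ that, of "Mi *\<^sub>v Matrix.vec k x"] Mi by (simp add: coef_def)
  qed
  then show ?thesis
    using repr unfolding M_def by blast
qed

context norm_on_Rk
begin

lemma unit_ball_coordinates_bounded: "\<exists>R. \<forall>y\<in>unit_ball k N. \<forall>i. \<bar>y i\<bar> \<le> R"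
proof -
  obtain a where a: "a > 0" "\<And>x i. x \<in> Rk k \<Longrightarrow> a * \<bar>x i\<bar> \<le> N x"
    using coordinate_bound[OF is_norm] by auto
  have "\<bar>y i\<bar> \<le> 1 / a" if "y \<in> unit_ball k N" for y i
  proof -
    have "a * \<bar>y i\<bar> \<le> 1"
      using a(2)[of y i] that by (auto simp: unit_ball_def)
    then show ?thesis
      using a(1) by (simp add: field_simps)
  qed
  then show ?thesis
    by blast
qed

lemma unit_ball_nonsingular_family: "\<exists>u. (\<forall>j<k. u j \<in> unit_ball k N) \<and> det (col_mat k u) \<noteq> 0"
proof -
  define e where "e j = (\<lambda>i::nat. if i = j then 1 else 0 :: real)" for j
  have e: "e j \<in> Rk k" if "j < k" for j
    using that by (auto simp: e_def Rk_def)
  define \<mu> where "\<mu> = 1 + (\<Sum>j<k. N (e j))"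
  have N_e: "N (e j) \<le> \<mu>" if "j < k" for j
  proof -
    have "N (e j) \<le> (\<Sum>j<k. N (e j))"
      using that e nonneg by (intro member_le_sum) auto
    then show ?thesis
      by (simp add: \<mu>_def)
  qed
  have \<mu>: "\<mu> \<ge> 1"
    using e nonneg sum_nonneg[of "{..<k}" "\<lambda>j. N (e j)"] by (simp add: \<mu>_def)
  define u where "u j = (\<lambda>i. 1 / \<mu> * e j i)" for j
  have "u j \<in> unit_ball k N" if "j < k" for j
  proof -
    have "N (u j) = 1 / \<mu> * N (e j)"
      using scale[OF e[OF that], of "1 / \<mu>"] \<mu> by (simp add: u_def del: times_divide_eq_left)
    also have "\<dots> \<le> 1"
      using N_e[OF that] \<mu> by (simp add: field_simps)
    finally show ?thesis
      using Rk_scale[OF e[OF that], of "1 / \<mu>"] by (simp add: unit_ball_def u_def)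
  qed
  moreover have "col_mat k u = (1 / \<mu>) \<cdot>\<^sub>m 1\<^sub>m k"
    by (rule eq_matI) (auto simp: col_mat_def u_def e_def)
  then have "det (col_mat k u) \<noteq> 0"
    using \<mu> by simp
  ultimately show ?thesis
    by blast
qed

text \<open>Auerbach's lemma up to a factor 2, via Cramer's rule: replacing \<open>v j\<close> by \<open>x\<close> multiplies
  \<open>det\<close> by \<open>coef x j\<close>.\<close>
lemma near_auerbach_basis:
  "\<exists>v coef. (\<forall>j<k. v j \<in> unit_ball k N) \<and> (\<forall>x\<in>Rk k. \<forall>i. x i = (\<Sum>j<k. coef x j * v j i)) \<and>
     (\<forall>x\<in>unit_ball k N. \<forall>j<k. \<bar>coef x j\<bar> \<le> 2)"
proof -
  obtain R where bounded: "\<forall>y\<in>unit_ball k N. \<forall>i. \<bar>y i\<bar> \<le> R"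
    using unit_ball_coordinates_bounded by blast
  obtain v where v: "\<forall>j<k. v j \<in> unit_ball k N" "det (col_mat k v) \<noteq> 0"
    and max: "\<forall>w. (\<forall>j<k. w j \<in> unit_ball k N) \<longrightarrow> \<bar>det (col_mat k w)\<bar> \<le> 2 * \<bar>det (col_mat k v)\<bar>"
    using exists_near_maximal_det[OF bounded] unit_ball_nonsingular_family by blast
  have "\<forall>j<k. v j \<in> Rk k"
    using v(1) by (simp add: unit_ball_def)
  from cramer_coefficients[OF v(2) this] obtain coef where coef: "\<forall>x\<in>Rk k.
    (\<forall>i. x i = (\<Sum>j<k. coef x j * v j i)) \<and>
    (\<forall>j<k. coef x j * det (col_mat k v) = det (col_mat k (v(j := x))))"
    by blast
  have "\<bar>coef x j\<bar> \<le> 2" if x: "x \<in> unit_ball k N" and j: "j < k" for x j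
  proof -
    have "coef x j * det (col_mat k v) = det (col_mat k (v(j := x)))"
      using coef x j by (simp add: unit_ball_def)
    moreover have "\<bar>det (col_mat k (v(j := x)))\<bar> \<le> 2 * \<bar>det (col_mat k v)\<bar>"
      using max v(1) x by simp
    ultimately have "\<bar>coef x j\<bar> * \<bar>det (col_mat k v)\<bar> \<le> 2 * \<bar>det (col_mat k v)\<bar>"
      by (metis abs_mult)
    then show ?thesis
      using v(2) by simp
  qed
  then show ?thesis
    using v(1) coef unfolding unit_ball_def by blast
qed

end

section \<open>Covering the unit ball\<close>

lemma finite_representatives:
  assumes "f ` B \<subseteq> I" "finite I"
  shows "\<exists>C\<subseteq>B. finite C \<and> card C \<le> card I \<and> (\<forall>y\<in>B. \<exists>c\<in>C. f c = f y)"
proof (intro exI conjI)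
  define C where "C = inv_into B f ` f ` B"
  show "C \<subseteq> B" "\<forall>y\<in>B. \<exists>c\<in>C. f c = f y"
    by (auto simp: C_def inv_into_into f_inv_into_f)
  have "finite (f ` B)"
    using assms finite_subset by blast
  then show "finite C"
    by (simp add: C_def)
  have "card C \<le> card (f ` B)"
    unfolding C_def by (rule card_image_le) fact
  also have "\<dots> \<le> card I"
    using assms by (rule card_mono[rotated])
  finally show "card C \<le> card I" .
qed

lemma abs_diff_less_if_floor_divide_eq:
  fixes a b s :: real
  assumes "s > 0" "\<lfloor>a / s\<rfloor> = \<lfloor>b / s\<rfloor>"
  shows "\<bar>a - b\<bar> < s"
proof -
  have "\<bar>a / s - b / s\<bar> < 1"
    using assms(2) floor_correct[of "a / s"] floor_correct[of "b / s"] by linarith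
  then show ?thesis
    using assms(1) by (simp add: diff_divide_distrib[symmetric] field_simps)
qed

lemma grid_size_le:
  assumes "0 < s" "s \<le> 1"
  shows "real (nat (2 * \<lceil>2 / s\<rceil> + 1)) \<le> 7 / s"
proof -
  have "0 \<le> \<lceil>2 / s\<rceil>"
    using ceiling_mono[of 0 "2 / s"] assms by simp
  then have "0 \<le> 2 * \<lceil>2 / s\<rceil> + 1"
    by linarith
  then have "real (nat (2 * \<lceil>2 / s\<rceil> + 1)) = 2 * of_int \<lceil>2 / s\<rceil> + 1"
    by simp
  also have "\<dots> \<le> 2 * (2 / s + 1) + 1"
    using of_int_ceiling_le_add_one[of "2 / s"] by (intro add_right_mono mult_left_mono) auto
  also have "\<dots> \<le> 7 / s"
    using assms by (simp add: field_simps)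
  finally show ?thesis .
qed

lemma floor_divide_mem_range:
  fixes c b s :: real
  assumes "\<bar>c\<bar> \<le> b" "0 < s"
  shows "\<lfloor>c / s\<rfloor> \<in> {- \<lceil>b / s\<rceil>..\<lceil>b / s\<rceil>}"
proof -
  have "- (b / s) \<le> c / s" "c / s \<le> b / s"
    using assms by (simp_all add: field_simps abs_le_iff)
  then have "\<lfloor>- (b / s)\<rfloor> \<le> \<lfloor>c / s\<rfloor>" "\<lfloor>c / s\<rfloor> \<le> \<lceil>b / s\<rceil>"
    by (simp_all add: floor_mono order_trans[OF _ floor_le_ceiling])
  then show ?thesis
    by (simp add: ceiling_def)
qed

context norm_on_Rk
begin

lemma norm_combination_le:
  assumes "\<forall>j<k. v j \<in> unit_ball k N" "\<forall>j<k. \<bar>c j\<bar> \<le> s"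
  shows "N (\<lambda>i. \<Sum>j<k. c j * v j i) \<le> real k * s"
proof -
  have "N (\<lambda>i. \<Sum>j<k. c j * v j i) \<le> (\<Sum>j<k. \<bar>c j\<bar> * N (v j))"
    using assms(1) by (intro sum_le) (auto simp: unit_ball_def)
  also have "\<dots> \<le> (\<Sum>j<k. s)"
  proof (rule sum_mono)
    fix j assume "j \<in> {..<k}"
    then have "\<bar>c j\<bar> \<le> s" "0 \<le> N (v j)" "N (v j) \<le> 1"
      using assms nonneg by (auto simp: unit_ball_def)
    then show "\<bar>c j\<bar> * N (v j) \<le> s"
      using mult_mono[of "\<bar>c j\<bar>" s "N (v j)" 1] by simp
  qed
  finally show ?thesis
    by simp
qed

lemma unit_ball_covering:
  assumes s: "0 < s" "s \<le> 1"
  shows "\<exists>C\<subseteq>unit_ball k N. finite C \<and> real (card C) \<le> (7 / s) ^ k \<and>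
    (\<forall>y\<in>unit_ball k N. \<exists>c\<in>C. N (\<lambda>i. y i - c i) \<le> real k * s)"
proof -
  obtain v coef where v: "\<forall>j<k. v j \<in> unit_ball k N"
    and repr: "\<forall>x\<in>Rk k. \<forall>i. x i = (\<Sum>j<k. coef x j * v j i)"
    and coef: "\<forall>x\<in>unit_ball k N. \<forall>j<k. \<bar>coef x j\<bar> \<le> 2"
    using near_auerbach_basis by blast
  define T where "T = \<lceil>2 / s\<rceil>"
  define cell where "cell x = restrict (\<lambda>j. \<lfloor>coef x j / s\<rfloor>) {..<k}" for x
  define I where "I = PiE {..<k} (\<lambda>_. {-T..T})"
  have "cell ` unit_ball k N \<subseteq> I"
  proof -
    have "\<lfloor>coef x j / s\<rfloor> \<in> {-T..T}" if "x \<in> unit_ball k N" "j < k" for x j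
      unfolding T_def using coef that s(1) by (intro floor_divide_mem_range) auto
    then show ?thesis
      unfolding cell_def I_def by (intro image_subsetI restrict_PiE_iff[THEN iffD2]) auto
  qed
  moreover have "finite I"
    by (simp add: I_def finite_PiE)
  ultimately obtain C where C: "C \<subseteq> unit_ball k N" "finite C" "card C \<le> card I"
    and rep: "\<forall>y\<in>unit_ball k N. \<exists>c\<in>C. cell c = cell y"
    using finite_representatives by metis
  have "real (card C) \<le> real (nat (2 * T + 1)) ^ k"
    using C(3) by (simp add: I_def card_PiE flip: of_nat_power)
  also have "\<dots> \<le> (7 / s) ^ k"
    unfolding T_def using grid_size_le[OF s] by (intro power_mono) auto
  finally have card: "real (card C) \<le> (7 / s) ^ k" .
  have "N (\<lambda>i. y i - c i) \<le> real k * s"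
    if y: "y \<in> unit_ball k N" and c: "c \<in> unit_ball k N" and "cell c = cell y" for y c
  proof -
    have "\<forall>j<k. \<bar>coef y j - coef c j\<bar> \<le> s"
      using \<open>cell c = cell y\<close> s abs_diff_less_if_floor_divide_eq
      by (auto simp: cell_def restrict_def fun_eq_iff less_imp_le split: if_splits)
    moreover have "(\<lambda>i. y i - c i) = (\<lambda>i. \<Sum>j<k. (coef y j - coef c j) * v j i)"
      using repr y c by (auto simp: unit_ball_def left_diff_distrib sum_subtractf)
    ultimately show ?thesis
      using norm_combination_le[OF v] by simp
  qed
  then show ?thesis
    using C card rep by (intro exI[of _ C]) blast
qed

end

section \<open>Entropy numbers bound Lipschitz widths\<close>

lemma entropy_number_le:
  assumes "finite C" "card C \<le> 2 ^ m" "K \<subseteq> (\<Union>c\<in>C. cball c t)" "t > 0"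
  shows "entropy_number m K \<le> t"
  unfolding entropy_number_def
  by (rule cInf_lower) (use assms in \<open>auto intro!: bdd_belowI[of _ 0]\<close>)

lemma entropy_number_empty: "entropy_number m ({} :: 'a::real_normed_vector set) = 0"
proof -
  have "\<exists>C :: 'a set. finite C \<and> card C \<le> 2 ^ m"
    by (intro exI[of _ "{}"]) simp
  then show ?thesis
    unfolding entropy_number_def by (simp flip: greaterThan_def)
qed

lemma nonempty_if_entropy_number_pos: "0 < entropy_number m K \<Longrightarrow> K \<noteq> {}"
  by (auto simp: entropy_number_empty)

lemma rad_nonneg:
  assumes "bounded K" "K \<noteq> {}"
  shows "0 \<le> rad K"
  unfolding rad_def
proof (rule cInf_greatest)
  fix r assume "r \<in> range (\<lambda>g. SUP f\<in>K. norm (f - g))"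
  then obtain g where r: "r = (SUP f\<in>K. norm (f - g))"
    by blast
  have "bounded ((\<lambda>f. f - g) ` K)"
    using assms(1) by (simp add: bounded_translation_minus)
  then have "bdd_above ((\<lambda>f. norm (f - g)) ` K)"
    by (auto simp: bounded_iff bdd_above_def)
  then show "0 \<le> r"
    unfolding r using assms(2) by (meson all_not_in_conv cSUP_upper2 norm_ge_zero)
qed simp

context norm_on_Rk
begin

lemma zero_in_unit_ball: "(\<lambda>i. 0) \<in> unit_ball k N"
  by (simp add: unit_ball_def)

lemma lipschitz_on_ball_const: "0 \<le> \<gamma> \<Longrightarrow> lipschitz_on_ball \<gamma> k N (\<lambda>_. c)"
  by (auto simp: lipschitz_on_ball_def unit_ball_def intro!: mult_nonneg_nonneg nonneg)

lemma bdd_above_approx_error: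
  fixes \<Phi> :: "(nat \<Rightarrow> real) \<Rightarrow> 'a::real_normed_vector"
  assumes "bounded K"
  shows "bdd_above ((\<lambda>f. INF y\<in>unit_ball k N. norm (f - \<Phi> y)) ` K)"
proof -
  obtain R where R: "\<And>f. f \<in> K \<Longrightarrow> norm f \<le> R"
    using assms by (auto simp: bounded_iff)
  have "(INF y\<in>unit_ball k N. norm (f - \<Phi> y)) \<le> R + norm (\<Phi> (\<lambda>i. 0))" if "f \<in> K" for f
  proof -
    have "(INF y\<in>unit_ball k N. norm (f - \<Phi> y)) \<le> norm (f - \<Phi> (\<lambda>i. 0))"
      using zero_in_unit_ball by (auto intro!: cINF_lower bdd_belowI2[of _ 0])
    then show ?thesis
      using R[OF that] norm_triangle_ineq4[of f "\<Phi> (\<lambda>i. 0)"] by linarith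
  qed
  then show ?thesis
    by (rule bdd_aboveI2)
qed

lemma approx_error_nonneg:
  fixes \<Phi> :: "(nat \<Rightarrow> real) \<Rightarrow> 'a::real_normed_vector"
  assumes "bounded K" "K \<noteq> {}"
  shows "0 \<le> (SUP f\<in>K. INF y\<in>unit_ball k N. norm (f - \<Phi> y))"
proof -
  have "0 \<le> (INF y\<in>unit_ball k N. norm (f - \<Phi> y))" for f
    using zero_in_unit_ball by (auto intro!: cINF_greatest)
  then show ?thesis
    using assms(2) cSUP_upper2[OF bdd_above_approx_error[OF assms(1)]] by (meson all_not_in_conv)
qed

lemma fixed_lip_width_nonneg:
  assumes "bounded K" "K \<noteq> {}" "0 \<le> \<gamma>"
  shows "0 \<le> fixed_lip_width \<gamma> K k N"
  unfolding fixed_lip_width_def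
  using lipschitz_on_ball_const[OF assms(3)] approx_error_nonneg[OF assms(1,2)]
  by (intro cInf_greatest) auto

end

lemma lip_width_index_nonempty:
  "1 \<le> n \<Longrightarrow> {fixed_lip_width \<gamma> K k N | k N. 1 \<le> k \<and> k \<le> n \<and> is_norm_on k N} \<noteq> {}"
  using norm_on_Rk_l1[of 1] by (auto simp: norm_on_Rk_def)

lemma lip_width_antimono:
  fixes K :: "'a::real_normed_vector set"
  assumes K: "bounded K" "K \<noteq> {}" and "0 \<le> \<gamma>" and n: "1 \<le> n" "n \<le> n'"
  shows "lip_width n' \<gamma> K \<le> lip_width n \<gamma> K"
  unfolding lip_width_def
proof (rule cInf_superset_mono)
  show "{fixed_lip_width \<gamma> K k N | k N. 1 \<le> k \<and> k \<le> n \<and> is_norm_on k N} \<noteq> {}"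
    using lip_width_index_nonempty[OF n(1)] .
  show "bdd_below {fixed_lip_width \<gamma> K k N | k N. 1 \<le> k \<and> k \<le> n' \<and> is_norm_on k N}"
    using norm_on_Rk.fixed_lip_width_nonneg[OF _ assms(1-3)]
    by (intro bdd_belowI[of _ 0]) (auto simp: norm_on_Rk_def)
  show "{fixed_lip_width \<gamma> K k N | k N. 1 \<le> k \<and> k \<le> n \<and> is_norm_on k N}
    \<subseteq> {fixed_lip_width \<gamma> K k N | k N. 1 \<le> k \<and> k \<le> n' \<and> is_norm_on k N}"
    using n(2) order_trans by blast
qed

lemma (in norm_on_Rk) entropy_number_le_approx_error:
  assumes K: "bounded K" "K \<noteq> {}" and \<gamma>: "0 \<le> \<gamma>" and s: "0 < s" "s \<le> 1"
    and m: "(7 / s) ^ k \<le> 2 ^ m" and \<Phi>: "lipschitz_on_ball \<gamma> k N \<Phi>"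
  shows "entropy_number m K \<le> (SUP f\<in>K. INF y\<in>unit_ball k N. norm (f - \<Phi> y)) + \<gamma> * (real k * s)"
    (is "_ \<le> ?S + _")
proof (rule field_le_epsilon)
  fix \<eta> :: real assume \<eta>: "0 < \<eta>"
  obtain C where C: "C \<subseteq> unit_ball k N" "finite C" "real (card C) \<le> (7 / s) ^ k"
    and cover: "\<forall>y\<in>unit_ball k N. \<exists>c\<in>C. N (\<lambda>i. y i - c i) \<le> real k * s"
    using unit_ball_covering[OF s] by blast
  have "f \<in> (\<Union>c\<in>\<Phi> ` C. cball c (?S + \<gamma> * (real k * s) + \<eta>))" if f: "f \<in> K" for f
  proof -
    have "(INF y\<in>unit_ball k N. norm (f - \<Phi> y)) < ?S + \<eta>"
      using cSUP_upper[OF f bdd_above_approx_error[OF K(1), where \<Phi> = \<Phi>]] \<eta> by linarith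
    then obtain y where y: "y \<in> unit_ball k N" "norm (f - \<Phi> y) < ?S + \<eta>"
      using cInf_lessD[of "(\<lambda>y. norm (f - \<Phi> y)) ` unit_ball k N"] zero_in_unit_ball by blast
    obtain c where c: "c \<in> C" "N (\<lambda>i. y i - c i) \<le> real k * s"
      using cover y(1) by blast
    have "norm (\<Phi> y - \<Phi> c) \<le> \<gamma> * N (\<lambda>i. y i - c i)"
      using \<Phi> y(1) c(1) C(1) unfolding lipschitz_on_ball_def by blast
    also have "\<dots> \<le> \<gamma> * (real k * s)"
      using c(2) \<gamma> by (rule mult_left_mono)
    finally have "dist (\<Phi> c) f \<le> ?S + \<gamma> * (real k * s) + \<eta>"
      using y(2) norm_triangle_ineq[of "\<Phi> c - \<Phi> y" "\<Phi> y - f"]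
      by (simp add: dist_norm norm_minus_commute)
    then show ?thesis
      using c(1) by auto
  qed
  moreover have "card (\<Phi> ` C) \<le> 2 ^ m"
  proof -
    have "real (card (\<Phi> ` C)) \<le> real (card C)"
      using card_image_le[OF C(2)] by simp
    then have "real (card (\<Phi> ` C)) \<le> 2 ^ m"
      using C(3) m by linarith
    then show ?thesis
      by (metis of_nat_le_iff of_nat_numeral of_nat_power)
  qed
  moreover have "0 < ?S + \<gamma> * (real k * s) + \<eta>"
    using approx_error_nonneg[OF K] \<gamma> s \<eta> by (simp add: add_nonneg_pos)
  ultimately show "entropy_number m K \<le> ?S + \<gamma> * (real k * s) + \<eta>"
    using C(2) by (intro entropy_number_le) auto
qed

lemma entropy_number_le_lip_width:
  fixes K :: "'a::real_normed_vector set"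
  assumes K: "bounded K" "K \<noteq> {}" and \<gamma>: "0 \<le> \<gamma>" and n: "1 \<le> n" and r: "0 < r" "r \<le> 1"
    and m: "(7 * real n / r) ^ n \<le> 2 ^ m"
  shows "entropy_number m K - \<gamma> * r \<le> lip_width n \<gamma> K"
  unfolding lip_width_def
proof (rule cInf_greatest[OF lip_width_index_nonempty[OF n]], safe)
  fix k N assume k: "1 \<le> k" "k \<le> n" and "is_norm_on k N"
  then interpret norm_on_Rk k N
    by (simp add: norm_on_Rk_def)
  define s where "s = r / real n"
  have s: "0 < s" "s \<le> 1" "real k * s \<le> r"
    using r n k by (auto simp: s_def field_simps)
  have "(7 / s) ^ k = (7 * real n / r) ^ k"
    by (simp add: s_def)
  also have "\<dots> \<le> (7 * real n / r) ^ n"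
    using r n k by (intro power_increasing) (auto simp: field_simps)
  finally have m': "(7 / s) ^ k \<le> 2 ^ m"
    using m by linarith
  have "entropy_number m K - \<gamma> * r \<le> (SUP f\<in>K. INF y\<in>unit_ball k N. norm (f - \<Phi> y))"
    if "lipschitz_on_ball \<gamma> k N \<Phi>" for \<Phi> :: "(nat \<Rightarrow> real) \<Rightarrow> 'a"
    using entropy_number_le_approx_error[OF K \<gamma> s(1,2) m' that] mult_left_mono[OF s(3) \<gamma>] by linarith
  then show "entropy_number m K - \<gamma> * r \<le> fixed_lip_width \<gamma> K k N"
    unfolding fixed_lip_width_def using lipschitz_on_ball_const[OF \<gamma>] by (intro cInf_greatest) auto
qed

lemma power_le_two_power_if_log_le:
  assumes "0 < x" "real n * log 2 x \<le> real m"
  shows "x ^ n \<le> 2 ^ m"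
proof -
  have "x ^ n = (2 powr log 2 x) ^ n"
    using assms(1) by simp
  also have "\<dots> = 2 powr (real n * log 2 x)"
    by (subst powr_realpow[symmetric]) (simp_all add: powr_powr mult.commute)
  also have "\<dots> \<le> 2 powr real m"
    using assms(2) by simp
  finally show ?thesis
    by (simp add: powr_realpow)
qed

text \<open>The radius \<open>r = t / (2 (\<gamma> + t))\<close> satisfies \<open>\<gamma> r \<le> t / 2\<close> and \<open>7 n / r = 14 (1 + \<gamma> / t) n\<close>.\<close>
lemma lip_width_ge_half:
  fixes K :: "'a::real_normed_vector set"
  assumes K: "bounded K" and \<gamma>: "0 \<le> \<gamma>" and n: "1 \<le> n" and t: "0 < t" "t < entropy_number m K"
    and m: "real n * log 2 (14 * (1 + \<gamma> / t) * real n) \<le> real m"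
  shows "t / 2 \<le> lip_width n \<gamma> K"
proof -
  have "K \<noteq> {}"
    using t by (intro nonempty_if_entropy_number_pos[of m]) linarith
  define r where "r = t / (2 * (\<gamma> + t))"
  have r: "0 < r" "r \<le> 1" "\<gamma> * r \<le> t / 2"
    using t \<gamma> by (auto simp: r_def field_simps)
  have "7 * real n / r = 14 * (1 + \<gamma> / t) * real n"
    using t \<gamma> by (simp add: r_def field_simps)
  moreover have "0 < 14 * (1 + \<gamma> / t) * real n"
    using t \<gamma> n by (simp add: add_pos_nonneg)
  ultimately have "(7 * real n / r) ^ n \<le> 2 ^ m"
    using power_le_two_power_if_log_le[OF _ m] by simp
  then have "entropy_number m K - \<gamma> * r \<le> lip_width n \<gamma> K"
    using entropy_number_le_lip_width[OF K \<open>K \<noteq> {}\<close> \<gamma> n r(1,2)] by blast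
  then show ?thesis
    using t r(3) by linarith
qed

lemma uniform_lower_bound_if_eventually:
  fixes f h :: "nat \<Rightarrow> real"
  assumes antimono: "\<And>n n'. n0 \<le> n \<Longrightarrow> n \<le> n' \<Longrightarrow> f n' \<le> f n"
    and h: "\<And>n. n0 \<le> n \<Longrightarrow> 0 < h n" and C: "0 < C"
    and ev: "eventually (\<lambda>n. C * h n \<le> f n) sequentially"
  shows "\<exists>C'>0. \<forall>n\<ge>n0. C' * h n \<le> f n"
proof -
  obtain n1 where n1: "n1 \<ge> n0" "\<And>n. n \<ge> n1 \<Longrightarrow> C * h n \<le> f n"
    using ev unfolding eventually_sequentially by (metis le_trans nat_le_linear)
  define H where "H = Max (h ` {n0..n1})"
  have H: "h n \<le> H" if "n0 \<le> n" "n \<le> n1" for n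
    unfolding H_def using that by (intro Max_ge) auto
  have "0 < H"
    using H[of n0] h[of n0] n1(1) by linarith
  define C' where "C' = min C (C * h n1 / H)"
  have "0 < C'"
    using C h[OF n1(1)] \<open>0 < H\<close> by (simp add: C'_def)
  moreover have "C' * h n \<le> f n" if n: "n0 \<le> n" for n
  proof (cases "n1 \<le> n")
    case True
    have "C' * h n \<le> C * h n"
      using h[OF n] by (intro mult_right_mono) (auto simp: C'_def)
    then show ?thesis
      using n1(2)[OF True] by linarith
  next
    case False
    have "C' * h n \<le> C * h n1 / H * H"
      unfolding C'_def using h[OF n] H[of n] n False C h[OF n1(1)] \<open>0 < H\<close>
      by (intro mult_mono) auto
    also have "\<dots> = C * h n1"
      using \<open>0 < H\<close> by simp
    also have "\<dots> \<le> f n1"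
      using n1(2) by simp
    also have "\<dots> \<le> f n"
      using antimono[OF n] False by simp
    finally show ?thesis .
  qed
  ultimately show ?thesis
    by blast
qed

section \<open>Polynomial and logarithmic rates\<close>

lemma log2_le_self: "0 < n \<Longrightarrow> log 2 (real n) \<le> real n"
  using log2_of_power_le[of n n] less_exp[of n] by simp

lemma min_powr_mult_le_powr:
  fixes L y c \<beta> :: real
  assumes "0 < L" "L \<le> y" "y \<le> c * L"
  shows "min 1 (c powr \<beta>) * L powr \<beta> \<le> y powr \<beta>"
proof (cases "0 \<le> \<beta>")
  case True
  have "min 1 (c powr \<beta>) * L powr \<beta> \<le> 1 * L powr \<beta>"
    by (intro mult_right_mono) auto
  also have "\<dots> \<le> y powr \<beta>"
    using assms True by (simp add: powr_mono2)
  finally show ?thesis .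
next
  case False
  have "0 < c * L"
    using assms by linarith
  then have "0 < c"
    using assms(1) by (simp add: zero_less_mult_iff)
  have "min 1 (c powr \<beta>) * L powr \<beta> \<le> c powr \<beta> * L powr \<beta>"
    by (intro mult_right_mono) auto
  also have "\<dots> = (c * L) powr \<beta>"
    using \<open>0 < c\<close> assms(1) by (simp add: powr_mult)
  also have "\<dots> \<le> y powr \<beta>"
    using assms False by (simp add: powr_mono2')
  finally show ?thesis .
qed

lemma log_powr_div_powr_pos:
  fixes n :: nat and a b :: real
  assumes "2 \<le> n"
  shows "0 < log 2 n powr a / real n powr b"
proof -
  have "0 < log 2 (real n)"
    using assms by simp
  then have "0 < log 2 n powr a"
    by (metis powr_gt_zero order_less_irrefl)
  then show ?thesis
    using assms by simp
qed

lemma log_powr_div_powr_ge: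
  fixes n :: nat and \<alpha> \<beta> :: real
  assumes "2 \<le> n"
  shows "real n powr - (\<alpha> + \<bar>\<beta> - \<alpha>\<bar>) \<le> log 2 n powr (\<beta> - \<alpha>) / real n powr \<alpha>"
proof -
  have L: "1 \<le> log 2 n" "log 2 n \<le> n"
    using assms log2_le_self[of n] by auto
  have lower: "real n powr - \<bar>\<beta> - \<alpha>\<bar> \<le> log 2 n powr (\<beta> - \<alpha>)"
  proof (cases "0 \<le> \<beta> - \<alpha>")
    case True
    have "real n powr - \<bar>\<beta> - \<alpha>\<bar> \<le> 1"
      using assms powr_mono[of "- \<bar>\<beta> - \<alpha>\<bar>" 0 "real n"] by simp
    also have "\<dots> \<le> log 2 n powr (\<beta> - \<alpha>)"
      using L True by (simp add: ge_one_powr_ge_zero)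
    finally show ?thesis .
  next
    case False
    then show ?thesis
      using assms L powr_mono2'[of "\<beta> - \<alpha>" "log 2 n" "real n"] by simp
  qed
  have "real n powr - (\<alpha> + \<bar>\<beta> - \<alpha>\<bar>) = real n powr (- \<bar>\<beta> - \<alpha>\<bar> - \<alpha>)"
    by (rule arg_cong[where f = "\<lambda>e. real n powr e"]) linarith
  also have "\<dots> = real n powr - \<bar>\<beta> - \<alpha>\<bar> / real n powr \<alpha>"
    by (rule powr_diff)
  also have "\<dots> \<le> log 2 n powr (\<beta> - \<alpha>) / real n powr \<alpha>"
    by (rule divide_right_mono[OF lower]) simp
  finally show ?thesis .
qed

lemma poly_index_bounds:
  fixes n :: nat and q :: real
  assumes n: "2 \<le> n" and q: "1 \<le> q"
  defines "L \<equiv> log 2 (real n)"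
  defines "m \<equiv> nat \<lceil>q * real n * L\<rceil>"
  shows "2 \<le> m" and "real m \<le> 2 * q * real n * L"
    and "L \<le> log 2 (real m)" and "log 2 (real m) \<le> (log 2 (2 * q) + 2) * L"
proof -
  have L: "1 \<le> L" "L \<le> real n"
    using n log2_le_self[of n] by (auto simp: L_def)
  have "1 * 2 \<le> q * real n"
    using q n by (intro mult_mono) auto
  then have "2 * 1 \<le> q * real n * L"
    using L by (intro mult_mono) auto
  moreover have "real m = of_int \<lceil>q * real n * L\<rceil>"
    using calculation by (simp add: m_def)
  ultimately have m: "q * real n * L \<le> real m" "real m \<le> q * real n * L + 1" "2 \<le> real m"
    using ceiling_correct[of "q * real n * L"] by linarith+
  then show "2 \<le> m" "real m \<le> 2 * q * real n * L"
    by linarith+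
  have "1 * 1 \<le> q * L"
    using q L by (intro mult_mono) auto
  then have "real n * 1 \<le> real n * (q * L)"
    by (intro mult_left_mono) auto
  then have "real n \<le> real m"
    using m(1) by (simp add: algebra_simps)
  then show "L \<le> log 2 (real m)"
    using n by (simp add: L_def)
  have "2 * q * real n * L \<le> 2 * q * real n * real n"
    using L q by (intro mult_left_mono) auto
  then have "real m \<le> (2 * q) * real n ^ 2"
    using \<open>real m \<le> 2 * q * real n * L\<close> by (simp add: power2_eq_square)
  then have "log 2 (real m) \<le> log 2 (2 * q * real n ^ 2)"
    using m(3) q n by (subst log_le_cancel_iff) auto
  also have "\<dots> = log 2 (2 * q) + 2 * L"
    using q n by (simp add: L_def log_mult log_nat_power)
  also have "\<dots> \<le> (log 2 (2 * q) + 2) * L"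
    using L q by (simp add: distrib_right mult_le_cancel_left1)
  finally show "log 2 (real m) \<le> (log 2 (2 * q) + 2) * L" .
qed

lemma poly_entropy_bound_ge:
  fixes n :: nat and q c1 \<alpha> \<beta> :: real
  assumes n: "2 \<le> n" and q: "1 \<le> q" and c1: "0 \<le> c1" and \<alpha>: "0 \<le> \<alpha>"
  defines "L \<equiv> log 2 (real n)"
  defines "m \<equiv> nat \<lceil>q * real n * L\<rceil>"
  shows "c1 * min 1 ((log 2 (2 * q) + 2) powr \<beta>) / (2 * q) powr \<alpha> * (L powr (\<beta> - \<alpha>) / real n powr \<alpha>)
    \<le> c1 * log 2 (real m) powr \<beta> / real m powr \<alpha>"
proof -
  have m: "2 \<le> m" "real m \<le> 2 * q * real n * L"
    and log_m: "L \<le> log 2 (real m)" "log 2 (real m) \<le> (log 2 (2 * q) + 2) * L"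
    unfolding L_def m_def using poly_index_bounds[OF n q] by blast+
  have L: "0 < L"
    using n by (simp add: L_def)
  have "min 1 ((log 2 (2 * q) + 2) powr \<beta>) * L powr \<beta> \<le> log 2 (real m) powr \<beta>"
    using L log_m by (rule min_powr_mult_le_powr)
  then have num: "c1 * (min 1 ((log 2 (2 * q) + 2) powr \<beta>) * L powr \<beta>) \<le> c1 * log 2 (real m) powr \<beta>"
    using c1 by (rule mult_left_mono)
  have "real m powr \<alpha> \<le> (2 * q * real n * L) powr \<alpha>"
    using m \<alpha> by (intro powr_mono2) auto
  also have "\<dots> = (2 * q) powr \<alpha> * (real n powr \<alpha> * L powr \<alpha>)"
    using q n L by (simp add: powr_mult mult.assoc)
  finally have den: "real m powr \<alpha> \<le> (2 * q) powr \<alpha> * (real n powr \<alpha> * L powr \<alpha>)" .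
  have "c1 * min 1 ((log 2 (2 * q) + 2) powr \<beta>) / (2 * q) powr \<alpha> * (L powr (\<beta> - \<alpha>) / real n powr \<alpha>)
      = c1 * (min 1 ((log 2 (2 * q) + 2) powr \<beta>) * L powr \<beta>) / ((2 * q) powr \<alpha> * (real n powr \<alpha> * L powr \<alpha>))"
    by (simp add: powr_diff field_simps)
  also have "\<dots> \<le> c1 * log 2 (real m) powr \<beta> / real m powr \<alpha>"
    using num den c1 m(1) by (intro frac_le) auto
  finally show ?thesis .
qed

lemma poly_log_condition:
  fixes n :: nat and A \<gamma> e h :: real
  assumes n: "2 \<le> n" "14 * (1 + \<gamma> / A) \<le> real n" and A: "0 < A" and \<gamma>: "0 \<le> \<gamma>" and e: "0 \<le> e"
    and h: "0 < h" "real n powr - e \<le> h"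
  shows "real n * log 2 (14 * (1 + \<gamma> / (A * h)) * real n) \<le> (2 + e) * real n * log 2 (real n)"
proof -
  have ne: "1 \<le> real n powr e"
    using n e by (simp add: ge_one_powr_ge_zero)
  have "inverse h \<le> inverse (real n powr - e)"
    using h n by (intro le_imp_inverse_le) auto
  then have "1 / h \<le> real n powr e"
    by (simp add: powr_minus inverse_eq_divide)
  then have "\<gamma> / A * (1 / h) \<le> \<gamma> / A * real n powr e"
    using \<gamma> A by (intro mult_left_mono) auto
  then have "1 + \<gamma> / (A * h) \<le> (1 + \<gamma> / A) * real n powr e"
    using ne by (simp add: distrib_right)
  then have "14 * real n * (1 + \<gamma> / (A * h)) \<le> 14 * real n * ((1 + \<gamma> / A) * real n powr e)"
    by (rule mult_left_mono) simp
  then have "14 * (1 + \<gamma> / (A * h)) * real n \<le> (14 * (1 + \<gamma> / A)) * (real n powr e * real n)"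
    by (simp add: ac_simps)
  also have "\<dots> \<le> real n * (real n powr e * real n)"
    using n(2) by (rule mult_right_mono) simp
  also have "\<dots> = real n powr (2 + e)"
    using n by (simp add: powr_add powr_realpow power2_eq_square)
  finally have "log 2 (14 * (1 + \<gamma> / (A * h)) * real n) \<le> (2 + e) * log 2 (real n)"
    using n A \<gamma> h by (subst (asm) log_le_cancel_iff[symmetric]) (auto simp: log_powr add_pos_nonneg)
  then show ?thesis
    by (simp add: mult_left_mono mult.commute mult.left_commute)
qed

lemma poly_rate_bound_at:
  fixes K :: "'a::real_normed_vector set" and n :: nat and c1 \<alpha> \<beta> \<gamma> :: real
  defines "q \<equiv> 2 + \<alpha> + \<bar>\<beta> - \<alpha>\<bar>"
  defines "A \<equiv> c1 * min 1 ((log 2 (2 * q) + 2) powr \<beta>) / (2 * q) powr \<alpha>"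
  assumes K: "bounded K" and c1: "0 < c1" and \<alpha>: "0 \<le> \<alpha>" and \<gamma>: "0 \<le> \<gamma>"
    and entropy: "\<forall>m::nat\<ge>2. c1 * log 2 m powr \<beta> / real m powr \<alpha> < entropy_number m K"
    and A: "0 < A" and n: "2 \<le> n" "14 * (1 + \<gamma> / A) \<le> real n"
  shows "A / 2 * (log 2 n powr (\<beta> - \<alpha>) / real n powr \<alpha>) \<le> lip_width n \<gamma> K"
proof -
  define h where "h = log 2 (real n) powr (\<beta> - \<alpha>) / real n powr \<alpha>"
  have q: "1 \<le> q"
    using \<alpha> by (simp add: q_def)
  have h: "0 < h" "real n powr - (\<alpha> + \<bar>\<beta> - \<alpha>\<bar>) \<le> h"
    using log_powr_div_powr_pos[OF n(1)] log_powr_div_powr_ge[OF n(1)] by (simp_all add: h_def)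
  define m where "m = nat \<lceil>q * real n * log 2 (real n)\<rceil>"
  have "A * h \<le> c1 * log 2 (real m) powr \<beta> / real m powr \<alpha>"
    unfolding A_def h_def m_def using poly_entropy_bound_ge[OF n(1) q less_imp_le[OF c1] \<alpha>] by simp
  also have "\<dots> < entropy_number m K"
    using entropy poly_index_bounds(1)[OF n(1) q] by (simp add: m_def)
  finally have entropy_m: "A * h < entropy_number m K" .
  have "0 \<le> \<alpha> + \<bar>\<beta> - \<alpha>\<bar>"
    using \<alpha> by simp
  then have "real n * log 2 (14 * (1 + \<gamma> / (A * h)) * real n) \<le> q * real n * log 2 (real n)"
    using poly_log_condition[OF n A \<gamma> _ h] by (simp add: q_def add.assoc)
  also have "\<dots> \<le> real m"
    unfolding m_def by (rule real_nat_ceiling_ge)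
  finally have "A * h / 2 \<le> lip_width n \<gamma> K"
    using lip_width_ge_half[OF K \<gamma> _ mult_pos_pos[OF A h(1)] entropy_m] n(1) by simp
  then show ?thesis
    unfolding h_def[symmetric] by (simp only: times_divide_eq_left)
qed

lemma lip_width_lower_bound_poly:
  fixes K :: "'a::real_normed_vector set"
  assumes K: "bounded K" and c1: "0 < c1" and \<alpha>: "0 \<le> \<alpha>" and \<gamma>: "0 \<le> \<gamma>"
    and entropy: "\<forall>m::nat\<ge>2. c1 * log 2 m powr \<beta> / real m powr \<alpha> < entropy_number m K"
  shows "\<exists>C>0. \<forall>n::nat\<ge>2. C * log 2 n powr (\<beta> - \<alpha>) / real n powr \<alpha> \<le> lip_width n \<gamma> K"
proof -
  define h where "h n = log 2 (real n) powr (\<beta> - \<alpha>) / real n powr \<alpha>" for n :: nat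
  define q where "q = 2 + \<alpha> + \<bar>\<beta> - \<alpha>\<bar>"
  define A where "A = c1 * min 1 ((log 2 (2 * q) + 2) powr \<beta>) / (2 * q) powr \<alpha>"
  have "1 \<le> q"
    using \<alpha> by (simp add: q_def)
  then have "0 \<le> log 2 (2 * q)"
    by simp
  then have "log 2 (2 * q) + 2 \<noteq> 0"
    by linarith
  then have A: "0 < A"
    using c1 \<open>1 \<le> q\<close> by (simp add: A_def)
  have h: "0 < h n" if "2 \<le> n" for n
    using log_powr_div_powr_pos[OF that] by (simp add: h_def)
  have "c1 / 2 powr \<alpha> < entropy_number 2 K"
    using entropy[rule_format, of 2] by simp
  moreover have "0 < c1 / 2 powr \<alpha>"
    using c1 by simp
  ultimately have "K \<noteq> {}"
    by (intro nonempty_if_entropy_number_pos[of 2]) linarith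
  have "\<forall>\<^sub>F n in sequentially. A / 2 * h n \<le> lip_width n \<gamma> K"
    using eventually_ge_at_top[of "max 2 (nat \<lceil>14 * (1 + \<gamma> / A)\<rceil>)"]
  proof eventually_elim
    case (elim n)
    then show ?case
      using poly_rate_bound_at[OF K c1 \<alpha> \<gamma> entropy A[unfolded A_def q_def]] by (simp add: A_def q_def h_def)
  qed
  then have "\<exists>C>0. \<forall>n\<ge>2. C * h n \<le> lip_width n \<gamma> K"
    using A h lip_width_antimono[OF K \<open>K \<noteq> {}\<close> \<gamma>]
    by (intro uniform_lower_bound_if_eventually[where C = "A / 2"]) auto
  then show ?thesis
    by (simp add: h_def)
qed

lemma lip_width_lower_bound_log:
  fixes K :: "'a::real_normed_vector set"
  assumes "bounded K" "0 < c1" "0 \<le> \<gamma>"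
    and "\<forall>m::nat\<ge>2. c1 * log 2 m powr (- \<alpha>) < entropy_number m K"
  shows "\<exists>C>0. \<forall>n::nat\<ge>2. C * log 2 n powr (- \<alpha>) \<le> lip_width n \<gamma> K"
proof -
  have "\<exists>C>0. \<forall>n::nat\<ge>2. C * log 2 n powr (- \<alpha> - 0) / real n powr 0 \<le> lip_width n \<gamma> K"
    using assms by (intro lip_width_lower_bound_poly[of K c1 0 \<gamma> "- \<alpha>"]) auto
  then show ?thesis
    by auto
qed

section \<open>Sub-exponential rates\<close>

lemma real_nat_ceiling_le_double: "1 \<le> x \<Longrightarrow> real (nat \<lceil>x\<rceil>) \<le> 2 * x"
  using ceiling_correct[of x] by linarith

lemma subexp_rate_constant:
  fixes c \<alpha> :: real
  assumes c: "0 < c" and \<alpha>: "0 < \<alpha>" "\<alpha> < 1"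
  shows "\<exists>\<kappa>\<ge>1. c * (2 * \<kappa>) powr \<alpha> \<le> \<kappa> / 2"
proof -
  define \<kappa> where "\<kappa> = max 1 ((4 * c) powr (1 / (1 - \<alpha>)))"
  have \<kappa>: "1 \<le> \<kappa>"
    by (simp add: \<kappa>_def)
  have "4 * c = ((4 * c) powr (1 / (1 - \<alpha>))) powr (1 - \<alpha>)"
    using c \<alpha> by (simp add: powr_powr)
  also have "\<dots> \<le> \<kappa> powr (1 - \<alpha>)"
    using \<alpha> by (intro powr_mono2) (auto simp: \<kappa>_def)
  finally have "4 * c * \<kappa> powr \<alpha> \<le> \<kappa> powr (1 - \<alpha>) * \<kappa> powr \<alpha>"
    by (rule mult_right_mono) simp
  also have "\<dots> = \<kappa>"
    using \<kappa> by (simp add: powr_add[symmetric])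
  finally have "4 * c * \<kappa> powr \<alpha> \<le> \<kappa>" .
  have pow2: "(2 * \<kappa>) powr \<alpha> \<le> 2 * \<kappa> powr \<alpha>"
    using \<kappa> \<alpha> powr_mono[of \<alpha> 1 2] by (simp add: powr_mult)
  have "c * (2 * \<kappa>) powr \<alpha> \<le> c * (2 * \<kappa> powr \<alpha>)"
    using pow2 c by (intro mult_left_mono) auto
  also have "\<dots> = 4 * c * \<kappa> powr \<alpha> / 2"
    by simp
  also have "\<dots> \<le> \<kappa> / 2"
    using \<open>4 * c * \<kappa> powr \<alpha> \<le> \<kappa>\<close> by simp
  finally show ?thesis
    using \<kappa> by blast
qed

lemma subexp_index_bounds:
  fixes n :: nat and \<kappa> c \<alpha> p :: real
  assumes n: "1 \<le> n" and \<kappa>: "1 \<le> \<kappa>" "c * (2 * \<kappa>) powr \<alpha> \<le> \<kappa> / 2"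
    and c: "0 \<le> c" and \<alpha>: "0 \<le> \<alpha>" "\<alpha> * (1 + p) = p" and p: "0 \<le> p"
  defines "m \<equiv> nat \<lceil>\<kappa> * real n powr (1 + p)\<rceil>"
  shows "1 \<le> m" and "\<kappa> * real n powr (1 + p) \<le> real m"
    and "c * real m powr \<alpha> \<le> \<kappa> / 2 * real n powr p"
proof -
  have "1 * 1 \<le> \<kappa> * real n powr (1 + p)"
    using n \<kappa> p by (intro mult_mono) (auto simp: ge_one_powr_ge_zero)
  then have m: "\<kappa> * real n powr (1 + p) \<le> real m" "real m \<le> 2 * (\<kappa> * real n powr (1 + p))"
    unfolding m_def using real_nat_ceiling_ge real_nat_ceiling_le_double by auto
  then show "1 \<le> m" "\<kappa> * real n powr (1 + p) \<le> real m"
    using \<open>1 * 1 \<le> _\<close> by linarith+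
  have "real m powr \<alpha> \<le> (2 * (\<kappa> * real n powr (1 + p))) powr \<alpha>"
    using m \<alpha> by (intro powr_mono2) auto
  also have "\<dots> = (2 * \<kappa>) powr \<alpha> * real n powr p"
    using \<kappa> \<alpha>(2) by (simp add: powr_mult powr_powr mult.commute)
  finally have "c * real m powr \<alpha> \<le> c * (2 * \<kappa>) powr \<alpha> * real n powr p"
    using c by (simp add: mult_left_mono mult.assoc)
  also have "\<dots> \<le> \<kappa> / 2 * real n powr p"
    using \<kappa>(2) by (rule mult_right_mono) simp
  finally show "c * real m powr \<alpha> \<le> \<kappa> / 2 * real n powr p" .
qed

lemma subexp_log_condition:
  fixes n :: nat and c1 \<gamma> \<kappa> p :: real
  assumes c1: "0 < c1" and \<gamma>: "0 \<le> \<gamma>" and n: "1 \<le> n" and \<kappa>: "0 \<le> \<kappa>"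
    and log: "log 2 (14 * (1 + \<gamma> / c1) * real n) \<le> \<kappa> / 2 * real n powr p"
  defines "h \<equiv> 2 powr (- (\<kappa> / 2) * real n powr p)"
  shows "real n * log 2 (14 * (1 + \<gamma> / (c1 * h)) * real n) \<le> \<kappa> * real n powr (1 + p)"
proof -
  have "h \<le> 2 powr 0"
    unfolding h_def using \<kappa> by (intro powr_mono) auto
  then have h: "0 < h" "h \<le> 1"
    by (auto simp: h_def)
  have pos: "0 < 1 + \<gamma> / (c1 * h)" "0 < 1 + \<gamma> / c1"
    using h c1 \<gamma> by (simp_all add: add_pos_nonneg)
  have "1 + \<gamma> / (c1 * h) \<le> (1 + \<gamma> / c1) / h"
    using h c1 \<gamma> by (simp add: field_simps)
  then have "14 * (1 + \<gamma> / (c1 * h)) * real n \<le> 14 * ((1 + \<gamma> / c1) / h) * real n"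
    by (intro mult_right_mono mult_left_mono) auto
  then have "log 2 (14 * (1 + \<gamma> / (c1 * h)) * real n) \<le> log 2 (14 * ((1 + \<gamma> / c1) / h) * real n)"
    using pos h n by (subst log_le_cancel_iff) auto
  also have "\<dots> = log 2 (14 * (1 + \<gamma> / c1) * real n / h)"
    by simp
  also have "\<dots> = log 2 (14 * (1 + \<gamma> / c1) * real n) - log 2 h"
    using pos h n by (intro log_divide_pos) auto
  also have "\<dots> = log 2 (14 * (1 + \<gamma> / c1) * real n) + \<kappa> / 2 * real n powr p"
    by (simp add: h_def)
  also have "\<dots> \<le> \<kappa> * real n powr p"
    using log by simp
  finally show ?thesis
    using n by (simp add: mult_left_mono powr_add mult.left_commute)
qed

lemma subexp_rate_bound_at:
  fixes K :: "'a::real_normed_vector set" and n :: nat and c1 c \<alpha> \<gamma> \<kappa> :: real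
  defines "p \<equiv> \<alpha> / (1 - \<alpha>)"
  assumes K: "bounded K" and c1: "0 < c1" and c: "0 < c" and \<alpha>: "0 < \<alpha>" "\<alpha> < 1" and \<gamma>: "0 \<le> \<gamma>"
    and entropy: "\<forall>m::nat\<ge>1. c1 * 2 powr (- c * real m powr \<alpha>) < entropy_number m K"
    and \<kappa>: "1 \<le> \<kappa>" "c * (2 * \<kappa>) powr \<alpha> \<le> \<kappa> / 2"
    and n: "1 \<le> n" "log 2 (14 * (1 + \<gamma> / c1) * real n) \<le> \<kappa> / 2 * real n powr p"
  shows "c1 / 2 * 2 powr (- (\<kappa> / 2) * real n powr p) \<le> lip_width n \<gamma> K"
proof -
  have p: "0 < p" "\<alpha> * (1 + p) = p"
    using \<alpha> by (auto simp: p_def field_simps)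
  define h where "h = 2 powr (- (\<kappa> / 2) * real n powr p)"
  define m where "m = nat \<lceil>\<kappa> * real n powr (1 + p)\<rceil>"
  note m = subexp_index_bounds[OF n(1) \<kappa> less_imp_le[OF c] less_imp_le[OF \<alpha>(1)] p(2) less_imp_le[OF p(1)],
      folded m_def]
  have "c1 * h \<le> c1 * 2 powr (- c * real m powr \<alpha>)"
    using m(3) c1 by (simp add: h_def)
  also have "\<dots> < entropy_number m K"
    using entropy m(1) by blast
  finally have "c1 * h < entropy_number m K" .
  moreover have "real n * log 2 (14 * (1 + \<gamma> / (c1 * h)) * real n) \<le> real m"
    using subexp_log_condition[OF c1 \<gamma> n(1) _ n(2)] \<kappa>(1) m(2) by (simp add: h_def)
  ultimately show ?thesis
    using lip_width_ge_half[OF K \<gamma> n(1)] c1 by (simp add: h_def)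
qed

lemma lip_width_lower_bound_exp:
  fixes K :: "'a::real_normed_vector set"
  assumes K: "bounded K" and c1: "0 < c1" and c: "0 < c" and \<alpha>: "0 < \<alpha>" "\<alpha> < 1" and \<gamma>: "0 \<le> \<gamma>"
    and entropy: "\<forall>m::nat\<ge>1. c1 * 2 powr (- c * real m powr \<alpha>) < entropy_number m K"
  shows "\<exists>C>0. \<exists>c2>0. \<forall>n::nat\<ge>1. C * 2 powr (- c2 * real n powr (\<alpha> / (1 - \<alpha>))) \<le> lip_width n \<gamma> K"
proof -
  obtain \<kappa> where \<kappa>: "1 \<le> \<kappa>" "c * (2 * \<kappa>) powr \<alpha> \<le> \<kappa> / 2"
    using subexp_rate_constant[OF c \<alpha>] by blast
  define h where "h n = 2 powr (- (\<kappa> / 2) * real n powr (\<alpha> / (1 - \<alpha>)))" for n :: nat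
  have "0 < c1 * 2 powr (- c * real (1::nat) powr \<alpha>)"
    using c1 by simp
  then have "K \<noteq> {}"
    using entropy[rule_format, of 1] by (intro nonempty_if_entropy_number_pos[of 1]) linarith
  have "0 < 14 * (1 + \<gamma> / c1)" "0 < \<alpha> / (1 - \<alpha>)"
    using c1 \<gamma> \<alpha> by (simp_all add: add_pos_nonneg)
  then have "\<forall>\<^sub>F n in sequentially.
      log 2 (14 * (1 + \<gamma> / c1) * real n) \<le> \<kappa> / 2 * real n powr (\<alpha> / (1 - \<alpha>))"
    using \<kappa>(1) by real_asymp
  then have "\<forall>\<^sub>F n in sequentially. c1 / 2 * h n \<le> lip_width n \<gamma> K"
    using eventually_ge_at_top[of 1]
    by eventually_elim (use subexp_rate_bound_at[OF K c1 c \<alpha> \<gamma> entropy \<kappa>] in \<open>simp add: h_def\<close>)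
  then have "\<exists>C>0. \<forall>n\<ge>1. C * h n \<le> lip_width n \<gamma> K"
    using c1 lip_width_antimono[OF K \<open>K \<noteq> {}\<close> \<gamma>]
    by (intro uniform_lower_bound_if_eventually[where C = "c1 / 2"]) (auto simp: h_def)
  then obtain C where "C > 0" "\<forall>n\<ge>1. C * h n \<le> lip_width n \<gamma> K"
    by blast
  then show ?thesis
    using \<kappa>(1) unfolding h_def by (intro exI[of _ C] exI[of _ "\<kappa> / 2"] conjI) auto
qed

theorem theorem4p7:
  fixes K :: "'a::banach set"
  assumes "compact K"
  shows
   "(\<forall>c1 \<alpha> \<beta>::real. c1 > 0 \<and> \<alpha> > 0 \<and>
       (\<forall>n::nat\<ge>2. entropy_number n K > c1 * (log 2 n) powr \<beta> / real n powr \<alpha>) \<longrightarrow>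
       (\<forall>\<gamma>>0. \<exists>C>0. \<forall>n::nat\<ge>2.
           lip_width n \<gamma> K \<ge> C * (log 2 n) powr (\<beta> - \<alpha>) / real n powr \<alpha>))
  \<and> (\<forall>c1 \<alpha>::real. c1 > 0 \<and> \<alpha> > 0 \<and>
       (\<forall>n::nat\<ge>2. entropy_number n K > c1 * (log 2 n) powr (- \<alpha>)) \<longrightarrow>
       (\<forall>\<gamma>>0. \<exists>C>0. \<forall>n::nat\<ge>2. lip_width n \<gamma> K \<ge> C * (log 2 n) powr (- \<alpha>)))
  \<and> (\<forall>c1 c \<alpha>::real. c1 > 0 \<and> c > 0 \<and> 0 < \<alpha> \<and> \<alpha> < 1 \<and>
       (\<forall>n::nat\<ge>1. entropy_number n K > c1 * 2 powr (- c * real n powr \<alpha>)) \<longrightarrow>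
       (\<forall>\<gamma>\<ge>2 * rad K. \<exists>C>0. \<exists>c2>0. \<forall>n::nat\<ge>1.
           lip_width n \<gamma> K \<ge> C * 2 powr (- c2 * real n powr (\<alpha> / (1 - \<alpha>)))))"
proof -
  have K: "bounded K"
    using assms by (rule compact_imp_bounded)
  show ?thesis
  proof (intro conjI allI impI, goal_cases)
    case (1 c1 \<alpha> \<beta> \<gamma>)
    then show ?case
      by (intro lip_width_lower_bound_poly[OF K, of c1 \<alpha> \<gamma> \<beta>]) auto
  next
    case (2 c1 \<alpha> \<gamma>)
    then show ?case
      by (intro lip_width_lower_bound_log[OF K, of c1 \<gamma> \<alpha>]) auto
  next
    case (3 c1 c \<alpha> \<gamma>)
    then have "0 < c1 * 2 powr (- c * real (1::nat) powr \<alpha>)"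
      and "c1 * 2 powr (- c * real (1::nat) powr \<alpha>) < entropy_number 1 K"
      by (simp, blast)
    then have "0 < entropy_number 1 K"
      by linarith
    then have "0 \<le> rad K"
      by (intro rad_nonneg[OF K] nonempty_if_entropy_number_pos)
    with 3 show ?case
      by (intro lip_width_lower_bound_exp[OF K, of c1 c \<alpha> \<gamma>]) auto
  qed
qed

end
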